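(* Let $\{p_\sigma\}$ and $\{p'_\sigma\}$ be two systems of probability parameters indexed by the non-empty proper subsets $\sigma\subsetneq[n]$, with $p_\sigma\le p'_\sigma$ for all $\sigma$. Let $\underline{\mathbb P}_n,\underline{\mathbb P}'_n$ be the lower measures and $\overline{\mathbb P}_n,\overline{\mathbb P}'_n$ the upper measures on the set of simplicial subcomplexes of $\Delta_n$ associated to $\{p_\sigma\}$ and $\{p'_\sigma\}$ respectively. Let $\mathfrak P$ denote the set of pairs $(X,Y)$ of simplicial complexes $Y\subseteq X\subseteq\Delta_n$, with projections $\pi_1(X,Y)=X$, $\pi_2(X,Y)=Y$. (A) There exists a probability measure $\underline\mu$ on $\mathfrak P$ with $(\pi_1)_*\underline\mu=\underline{\mathbb P}'_n$ and $(\pi_2)_*\underline\mu=\underline{\mathbb P}_n$, and there exists a probability measure $\overline\mu$ on $\mathfrak P$ with $(\pi_1)_*\overline\mu=\overline{\mathbb P}'_n$ and $(\pi_2)_*\overline\mu=\overline{\mathbb P}_n$. (B) If additionally $p_\sigma=p'_\sigma$ for every simplex $\sigma$ of dimension $\le k$ (for an integer $k\ge0$), then $\underline\mu$ in (A) can be taken supported on pairs $(X,Y)$ with identical $k$-skeleta, $X^{(k)}=Y^{(k)}$. (C) If additionally $p_\sigma=p'_\sigma$ for every simplex $\sigma$ of dimension $>k$ (for a fixed integer $k$), then $\overline\mu$ in (A) can be taken supported on pairs $(X,Y)$ with $X-X^{(k)}=Y-Y^{(k)}$, i.e. $X$ and $Y$ have the same simplexes of dimension $>k$.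
   Context: $[n]=\{0,\dots,n\}$, $\Delta_n$ is the simplex consisting of all non-empty subsets of $[n]$; a simplex $\sigma$ has dimension $|\sigma|-1$. Given parameters $p_\sigma\in[0,1]$ for non-empty proper subsets $\sigma\subsetneq[n]$, let $X$ be the random hypergraph containing each such $\sigma$ independently with probability $p_\sigma$. The lower measure is the law of the largest simplicial complex contained in $X$ ($\sigma$ included iff all its non-empty subsets lie in $X$); the upper measure is the law of the smallest simplicial complex containing $X$ ($\sigma$ included iff some superset of $\sigma$ lies in $X$). $X^{(k)}$ denotes the $k$-skeleton. *)

theory Defs
  imports "HOL-Probability.Probability"
begin

definition simplices :: "nat \<Rightarrow> nat set set" where
  "simplices n = {\<sigma>. \<sigma> \<noteq> {} \<and> \<sigma> \<subseteq> {0..n}}"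

definition proper_simplices :: "nat \<Rightarrow> nat set set" where
  "proper_simplices n = {\<sigma>. \<sigma> \<noteq> {} \<and> \<sigma> \<subset> {0..n}}"

definition sdim :: "nat set \<Rightarrow> int" where
  "sdim \<sigma> = int (card \<sigma>) - 1"

definition is_subcomplex :: "nat \<Rightarrow> nat set set \<Rightarrow> bool" where
  "is_subcomplex n X \<longleftrightarrow> X \<subseteq> simplices n \<and>
     (\<forall>\<sigma>\<in>X. \<forall>\<tau>. \<tau> \<noteq> {} \<and> \<tau> \<subseteq> \<sigma> \<longrightarrow> \<tau> \<in> X)"

definition skeleton :: "int \<Rightarrow> nat set set \<Rightarrow> nat set set" where
  "skeleton k X = {\<sigma>\<in>X. sdim \<sigma> \<le> k}"

definition random_hypergraph :: "nat \<Rightarrow> (nat set \<Rightarrow> real) \<Rightarrow> nat set set pmf" where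
  "random_hypergraph n p =
     map_pmf (\<lambda>f. {\<sigma>\<in>proper_simplices n. f \<sigma>})
       (Pi_pmf (proper_simplices n) False (\<lambda>\<sigma>. bernoulli_pmf (p \<sigma>)))"

text \<open>Largest simplicial complex contained in X.\<close>
definition lower_complex :: "nat \<Rightarrow> nat set set \<Rightarrow> nat set set" where
  "lower_complex n X = {\<sigma>\<in>simplices n. \<forall>\<tau>. \<tau> \<noteq> {} \<and> \<tau> \<subseteq> \<sigma> \<longrightarrow> \<tau> \<in> X}"

text \<open>Smallest simplicial complex containing X.\<close>
definition upper_complex :: "nat \<Rightarrow> nat set set \<Rightarrow> nat set set" where
  "upper_complex n X = {\<sigma>\<in>simplices n. \<exists>\<tau>\<in>X. \<sigma> \<subseteq> \<tau>}"

definition lower_measure :: "nat \<Rightarrow> (nat set \<Rightarrow> real) \<Rightarrow> nat set set pmf" where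
  "lower_measure n p = map_pmf (lower_complex n) (random_hypergraph n p)"

definition upper_measure :: "nat \<Rightarrow> (nat set \<Rightarrow> real) \<Rightarrow> nat set set pmf" where
  "upper_measure n p = map_pmf (upper_complex n) (random_hypergraph n p)"

definition pair_space :: "nat \<Rightarrow> (nat set set \<times> nat set set) set" where
  "pair_space n = {(X, Y). is_subcomplex n X \<and> is_subcomplex n Y \<and> Y \<subseteq> X}"

definition is_coupling :: "nat \<Rightarrow> nat set set pmf \<Rightarrow> nat set set pmf
    \<Rightarrow> (nat set set \<times> nat set set) pmf \<Rightarrow> bool" where
  "is_coupling n P' P \<mu> \<longleftrightarrow> set_pmf \<mu> \<subseteq> pair_space n \<and>
     map_pmf fst \<mu> = P' \<and> map_pmf snd \<mu> = P"

end

theory Submission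
  imports Defs
begin

text \<open>Couple the two random hypergraphs coordinatewise: for each \<open>\<sigma>\<close>, draw the indicator for
  \<open>p' \<sigma>\<close> and, given that it is on, keep it with probability \<open>p \<sigma> / p' \<sigma>\<close>. This yields hypergraphs
  \<open>A \<subseteq> B\<close> differing only at simplices with \<open>p \<sigma> \<noteq> p' \<sigma>\<close>. Lower and upper complexes are
  monotone, a face of dimension \<open>\<le> k\<close> of the lower complex only involves simplices of dimension
  \<open>\<le> k\<close>, and a simplex of dimension \<open>> k\<close> of the upper complex only involves cofaces of dimension
  \<open>> k\<close>; so the induced couplings have the required support.\<close>

lemma rel_pmf_bernoulli_mono:
  fixes a b :: real
  assumes "0 \<le> a" "a \<le> b" "b \<le> 1"
  shows "rel_pmf (\<lambda>x y. y \<longrightarrow> x) (bernoulli_pmf b) (bernoulli_pmf a)"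
proof
  let ?pq = "bind_pmf (bernoulli_pmf b) (\<lambda>x. map_pmf (\<lambda>y. (x, x \<and> y)) (bernoulli_pmf (a / b)))"
  show "\<And>x y. (x, y) \<in> set_pmf ?pq \<Longrightarrow> y \<longrightarrow> x"
    by auto
  show "map_pmf fst ?pq = bernoulli_pmf b"
    by (simp add: map_bind_pmf map_pmf_comp bind_return_pmf')
  have "0 \<le> a / b" "a / b \<le> 1"
    using assms by (auto simp: divide_le_eq)
  then show "map_pmf snd ?pq = bernoulli_pmf a"
    using assms
    by (intro pmf_eqI)
      (auto simp: map_bind_pmf map_pmf_comp pmf_bind pmf_map vimage_def measure_pmf_single
        field_simps split: bool.splits)
qed

lemma rel_pmf_Pi_pmf:
  assumes "finite A" and "\<And>x. x \<in> A \<Longrightarrow> rel_pmf (R x) (p x) (q x)"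
  shows "rel_pmf (\<lambda>f g. \<forall>x\<in>A. R x (f x) (g x)) (Pi_pmf A dflt p) (Pi_pmf A dflt' q)"
proof -
  have "\<forall>x\<in>A. \<exists>c. set_pmf c \<subseteq> {(u, v). R x u v} \<and> map_pmf fst c = p x \<and> map_pmf snd c = q x"
    using assms(2) by (force elim!: rel_pmf.cases)
  then obtain pq where pq: "\<And>x. x \<in> A \<Longrightarrow> set_pmf (pq x) \<subseteq> {(u, v). R x u v}"
    "\<And>x. x \<in> A \<Longrightarrow> map_pmf fst (pq x) = p x" "\<And>x. x \<in> A \<Longrightarrow> map_pmf snd (pq x) = q x"
    by metis
  let ?PQ = "Pi_pmf A (dflt, dflt') pq"
  show ?thesis
  proof
    show "map_pmf fst (map_pmf (\<lambda>h. (fst \<circ> h, snd \<circ> h)) ?PQ) = Pi_pmf A dflt p"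
      using assms(1) by (simp add: map_pmf_comp Pi_pmf_map[symmetric] pq(2) cong: Pi_pmf_cong)
    show "map_pmf snd (map_pmf (\<lambda>h. (fst \<circ> h, snd \<circ> h)) ?PQ) = Pi_pmf A dflt' q"
      using assms(1) by (simp add: map_pmf_comp Pi_pmf_map[symmetric] pq(3) cong: Pi_pmf_cong)
    show "\<forall>x\<in>A. R x (f x) (g x)"
      if "(f, g) \<in> set_pmf (map_pmf (\<lambda>h. (fst \<circ> h, snd \<circ> h)) ?PQ)" for f g
      using that pq(1) assms(1) by (fastforce simp: set_Pi_pmf PiE_dflt_def)
  qed
qed

lemma finite_proper_simplices: "finite (proper_simplices n)"
  by (rule finite_subset[of _ "Pow {0..n}"]) (auto simp: proper_simplices_def)

lemma proper_simplices_subset_simplices: "proper_simplices n \<subseteq> simplices n"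
  by (auto simp: proper_simplices_def simplices_def)

lemma finite_simplex: "\<sigma> \<in> simplices n \<Longrightarrow> finite \<sigma>"
  by (auto simp: simplices_def intro: finite_subset)

lemma sdim_mono: "finite \<tau> \<Longrightarrow> \<sigma> \<subseteq> \<tau> \<Longrightarrow> sdim \<sigma> \<le> sdim \<tau>"
  unfolding sdim_def using card_mono[of \<tau> \<sigma>] by simp

lemma rel_pmf_random_hypergraph:
  assumes "\<And>\<sigma>. \<sigma> \<in> proper_simplices n \<Longrightarrow> 0 \<le> p \<sigma> \<and> p \<sigma> \<le> p' \<sigma> \<and> p' \<sigma> \<le> 1"
  shows "rel_pmf (\<lambda>B A. A \<subseteq> B \<and> B \<subseteq> proper_simplices n \<and> (\<forall>\<sigma>\<in>B - A. p \<sigma> \<noteq> p' \<sigma>))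
           (random_hypergraph n p') (random_hypergraph n p)"
proof -
  define R where "R \<sigma> x y \<longleftrightarrow> (y \<longrightarrow> x) \<and> (p \<sigma> = p' \<sigma> \<longrightarrow> x = y)" for \<sigma> and x y :: bool
  have "rel_pmf (R \<sigma>) (bernoulli_pmf (p' \<sigma>)) (bernoulli_pmf (p \<sigma>))"
    if "\<sigma> \<in> proper_simplices n" for \<sigma>
  proof (cases "p \<sigma> = p' \<sigma>")
    case True
    then show ?thesis by (auto simp: R_def intro: rel_pmf_reflI)
  next
    case False
    then show ?thesis
      using rel_pmf_bernoulli_mono[of "p \<sigma>" "p' \<sigma>"] assms[OF that]
      by (auto simp: R_def elim: pmf.rel_mono_strong)
  qed
  then have "rel_pmf (\<lambda>f g. \<forall>\<sigma>\<in>proper_simplices n. R \<sigma> (f \<sigma>) (g \<sigma>))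
      (Pi_pmf (proper_simplices n) False (\<lambda>\<sigma>. bernoulli_pmf (p' \<sigma>)))
      (Pi_pmf (proper_simplices n) False (\<lambda>\<sigma>. bernoulli_pmf (p \<sigma>)))"
    by (intro rel_pmf_Pi_pmf finite_proper_simplices)
  then show ?thesis
    unfolding random_hypergraph_def pmf.rel_map
    by (rule pmf.rel_mono_strong) (fastforce simp: R_def)
qed

lemma is_subcomplex_lower_complex: "is_subcomplex n (lower_complex n X)"
  unfolding is_subcomplex_def lower_complex_def simplices_def by auto

lemma is_subcomplex_upper_complex: "is_subcomplex n (upper_complex n X)"
  unfolding is_subcomplex_def upper_complex_def simplices_def by auto

lemma lower_complex_mono: "A \<subseteq> B \<Longrightarrow> lower_complex n A \<subseteq> lower_complex n B"
  unfolding lower_complex_def by auto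

lemma upper_complex_mono: "A \<subseteq> B \<Longrightarrow> upper_complex n A \<subseteq> upper_complex n B"
  unfolding upper_complex_def by auto

lemma skeleton_lower_complex_eq:
  assumes "A \<subseteq> B" and "\<And>\<sigma>. \<sigma> \<in> B - A \<Longrightarrow> k < sdim \<sigma>"
  shows "skeleton k (lower_complex n A) = skeleton k (lower_complex n B)"
proof
  show "skeleton k (lower_complex n A) \<subseteq> skeleton k (lower_complex n B)"
    unfolding skeleton_def using lower_complex_mono[OF assms(1)] by blast
  show "skeleton k (lower_complex n B) \<subseteq> skeleton k (lower_complex n A)"
  proof
    fix \<sigma> assume "\<sigma> \<in> skeleton k (lower_complex n B)"
    then have \<sigma>: "\<sigma> \<in> simplices n" "\<And>\<tau>. \<tau> \<noteq> {} \<Longrightarrow> \<tau> \<subseteq> \<sigma> \<Longrightarrow> \<tau> \<in> B" "sdim \<sigma> \<le> k"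
      by (simp_all add: skeleton_def lower_complex_def)
    have "\<tau> \<in> A" if "\<tau> \<noteq> {}" "\<tau> \<subseteq> \<sigma>" for \<tau>
    proof -
      have "sdim \<tau> \<le> k"
        using sdim_mono[OF finite_simplex[OF \<sigma>(1)] \<open>\<tau> \<subseteq> \<sigma>\<close>] \<sigma>(3) by linarith
      then show ?thesis
        using assms(2)[of \<tau>] \<sigma>(2)[OF that] by fastforce
    qed
    then show "\<sigma> \<in> skeleton k (lower_complex n A)"
      using \<sigma> by (simp add: skeleton_def lower_complex_def)
  qed
qed

lemma upper_complex_diff_skeleton_eq:
  assumes "A \<subseteq> B" "B \<subseteq> simplices n" and "\<And>\<sigma>. \<sigma> \<in> B - A \<Longrightarrow> sdim \<sigma> \<le> k"
  shows "upper_complex n A - skeleton k (upper_complex n A)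
       = upper_complex n B - skeleton k (upper_complex n B)"
proof
  show "upper_complex n A - skeleton k (upper_complex n A)
      \<subseteq> upper_complex n B - skeleton k (upper_complex n B)"
    unfolding skeleton_def using upper_complex_mono[OF assms(1)] by blast
  show "upper_complex n B - skeleton k (upper_complex n B)
      \<subseteq> upper_complex n A - skeleton k (upper_complex n A)"
  proof
    fix \<sigma> assume "\<sigma> \<in> upper_complex n B - skeleton k (upper_complex n B)"
    then obtain \<tau> where \<sigma>: "\<sigma> \<in> simplices n" "k < sdim \<sigma>" and "\<tau> \<in> B" "\<sigma> \<subseteq> \<tau>"
      by (auto simp: skeleton_def upper_complex_def)
    have "sdim \<sigma> \<le> sdim \<tau>"
      using \<open>\<tau> \<in> B\<close> assms(2) by (intro sdim_mono[OF finite_simplex \<open>\<sigma> \<subseteq> \<tau>\<close>]) blast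
    then have "\<tau> \<in> A"
      using assms(3)[of \<tau>] \<open>\<tau> \<in> B\<close> \<sigma>(2) by fastforce
    then show "\<sigma> \<in> upper_complex n A - skeleton k (upper_complex n A)"
      using \<sigma> \<open>\<sigma> \<subseteq> \<tau>\<close> by (auto simp: skeleton_def upper_complex_def)
  qed
qed

lemma coupling_of_rel_pmf:
  assumes "rel_pmf (\<lambda>X Y. (X, Y) \<in> pair_space n \<and> Q X Y) P' P"
  obtains \<mu> where "is_coupling n P' P \<mu>" and "\<forall>(X, Y)\<in>set_pmf \<mu>. Q X Y"
proof -
  obtain \<mu> where \<mu>: "\<And>X Y. (X, Y) \<in> set_pmf \<mu> \<Longrightarrow> (X, Y) \<in> pair_space n \<and> Q X Y"
    and "map_pmf fst \<mu> = P'" "map_pmf snd \<mu> = P"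
    using assms by (elim rel_pmf.cases) blast
  moreover have "set_pmf \<mu> \<subseteq> pair_space n"
    using \<mu> by fast
  ultimately show thesis
    using that by (force simp: is_coupling_def)
qed

lemma lower_measure_coupling:
  assumes "\<And>\<sigma>. \<sigma> \<in> proper_simplices n \<Longrightarrow> 0 \<le> p \<sigma> \<and> p \<sigma> \<le> p' \<sigma> \<and> p' \<sigma> \<le> 1"
  obtains \<mu> where "is_coupling n (lower_measure n p') (lower_measure n p) \<mu>"
    and "\<forall>k. (\<forall>\<sigma>\<in>proper_simplices n. sdim \<sigma> \<le> k \<longrightarrow> p \<sigma> = p' \<sigma>) \<longrightarrow>
           (\<forall>(X, Y)\<in>set_pmf \<mu>. skeleton k X = skeleton k Y)"
proof -
  have "rel_pmf (\<lambda>X Y. (X, Y) \<in> pair_space n \<and> (\<forall>k. (\<forall>\<sigma>\<in>proper_simplices n.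
           sdim \<sigma> \<le> k \<longrightarrow> p \<sigma> = p' \<sigma>) \<longrightarrow> skeleton k X = skeleton k Y))
         (lower_measure n p') (lower_measure n p)"
    unfolding lower_measure_def pmf.rel_map
    using rel_pmf_random_hypergraph[OF assms]
  proof (rule pmf.rel_mono_strong)
    fix B A assume AB: "A \<subseteq> B \<and> B \<subseteq> proper_simplices n \<and> (\<forall>\<sigma>\<in>B - A. p \<sigma> \<noteq> p' \<sigma>)"
    have "skeleton k (lower_complex n B) = skeleton k (lower_complex n A)"
      if "\<forall>\<sigma>\<in>proper_simplices n. sdim \<sigma> \<le> k \<longrightarrow> p \<sigma> = p' \<sigma>" for k
      using AB that by (intro skeleton_lower_complex_eq[symmetric]) (auto simp: not_le[symmetric])
    then show "(lower_complex n B, lower_complex n A) \<in> pair_space n \<and> (\<forall>k. (\<forall>\<sigma>\<in>proper_simplices n.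
        sdim \<sigma> \<le> k \<longrightarrow> p \<sigma> = p' \<sigma>) \<longrightarrow> skeleton k (lower_complex n B) = skeleton k (lower_complex n A))"
      using AB by (simp add: pair_space_def is_subcomplex_lower_complex lower_complex_mono)
  qed
  then show thesis
    using that by (elim coupling_of_rel_pmf) blast
qed

lemma upper_measure_coupling:
  assumes "\<And>\<sigma>. \<sigma> \<in> proper_simplices n \<Longrightarrow> 0 \<le> p \<sigma> \<and> p \<sigma> \<le> p' \<sigma> \<and> p' \<sigma> \<le> 1"
  obtains \<mu> where "is_coupling n (upper_measure n p') (upper_measure n p) \<mu>"
    and "\<forall>k. (\<forall>\<sigma>\<in>proper_simplices n. k < sdim \<sigma> \<longrightarrow> p \<sigma> = p' \<sigma>) \<longrightarrow>
           (\<forall>(X, Y)\<in>set_pmf \<mu>. X - skeleton k X = Y - skeleton k Y)"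
proof -
  have "rel_pmf (\<lambda>X Y. (X, Y) \<in> pair_space n \<and> (\<forall>k. (\<forall>\<sigma>\<in>proper_simplices n.
           k < sdim \<sigma> \<longrightarrow> p \<sigma> = p' \<sigma>) \<longrightarrow> X - skeleton k X = Y - skeleton k Y))
         (upper_measure n p') (upper_measure n p)"
    unfolding upper_measure_def pmf.rel_map
    using rel_pmf_random_hypergraph[OF assms]
  proof (rule pmf.rel_mono_strong)
    fix B A assume AB: "A \<subseteq> B \<and> B \<subseteq> proper_simplices n \<and> (\<forall>\<sigma>\<in>B - A. p \<sigma> \<noteq> p' \<sigma>)"
    have "upper_complex n B - skeleton k (upper_complex n B)
        = upper_complex n A - skeleton k (upper_complex n A)"
      if "\<forall>\<sigma>\<in>proper_simplices n. k < sdim \<sigma> \<longrightarrow> p \<sigma> = p' \<sigma>" for k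
      using AB that proper_simplices_subset_simplices[of n]
      by (intro upper_complex_diff_skeleton_eq[symmetric]) (auto simp: not_less[symmetric])
    then show "(upper_complex n B, upper_complex n A) \<in> pair_space n \<and> (\<forall>k. (\<forall>\<sigma>\<in>proper_simplices n.
        k < sdim \<sigma> \<longrightarrow> p \<sigma> = p' \<sigma>) \<longrightarrow> upper_complex n B - skeleton k (upper_complex n B)
          = upper_complex n A - skeleton k (upper_complex n A))"
      using AB by (simp add: pair_space_def is_subcomplex_upper_complex upper_complex_mono)
  qed
  then show thesis
    using that by (elim coupling_of_rel_pmf) blast
qed

theorem theorem4p1:
  fixes n :: nat and p p' :: "nat set \<Rightarrow> real"
  assumes p_range: "\<And>\<sigma>. \<sigma> \<in> proper_simplices n \<Longrightarrow> 0 \<le> p \<sigma> \<and> p \<sigma> \<le> 1"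
    and p'_range: "\<And>\<sigma>. \<sigma> \<in> proper_simplices n \<Longrightarrow> 0 \<le> p' \<sigma> \<and> p' \<sigma> \<le> 1"
    and mono: "\<And>\<sigma>. \<sigma> \<in> proper_simplices n \<Longrightarrow> p \<sigma> \<le> p' \<sigma>"
  shows "(\<exists>\<mu>. is_coupling n (lower_measure n p') (lower_measure n p) \<mu>)
    \<and> (\<exists>\<mu>. is_coupling n (upper_measure n p') (upper_measure n p) \<mu>)
    \<and> (\<forall>k::int. k \<ge> 0 \<longrightarrow>
         (\<forall>\<sigma>\<in>proper_simplices n. sdim \<sigma> \<le> k \<longrightarrow> p \<sigma> = p' \<sigma>) \<longrightarrow>
         (\<exists>\<mu>. is_coupling n (lower_measure n p') (lower_measure n p) \<mu> \<and>
              (\<forall>(X, Y)\<in>set_pmf \<mu>. skeleton k X = skeleton k Y)))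
    \<and> (\<forall>k::int.
         (\<forall>\<sigma>\<in>proper_simplices n. sdim \<sigma> > k \<longrightarrow> p \<sigma> = p' \<sigma>) \<longrightarrow>
         (\<exists>\<mu>. is_coupling n (upper_measure n p') (upper_measure n p) \<mu> \<and>
              (\<forall>(X, Y)\<in>set_pmf \<mu>. X - skeleton k X = Y - skeleton k Y)))"
proof -
  have range: "\<And>\<sigma>. \<sigma> \<in> proper_simplices n \<Longrightarrow> 0 \<le> p \<sigma> \<and> p \<sigma> \<le> p' \<sigma> \<and> p' \<sigma> \<le> 1"
    using p_range p'_range mono by blast
  obtain \<mu>\<^sub>L where "is_coupling n (lower_measure n p') (lower_measure n p) \<mu>\<^sub>L"
    and "\<forall>k. (\<forall>\<sigma>\<in>proper_simplices n. sdim \<sigma> \<le> k \<longrightarrow> p \<sigma> = p' \<sigma>) \<longrightarrow>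
           (\<forall>(X, Y)\<in>set_pmf \<mu>\<^sub>L. skeleton k X = skeleton k Y)"
    by (rule lower_measure_coupling[of n p p', OF range])
  moreover obtain \<mu>\<^sub>U where "is_coupling n (upper_measure n p') (upper_measure n p) \<mu>\<^sub>U"
    and "\<forall>k. (\<forall>\<sigma>\<in>proper_simplices n. k < sdim \<sigma> \<longrightarrow> p \<sigma> = p' \<sigma>) \<longrightarrow>
           (\<forall>(X, Y)\<in>set_pmf \<mu>\<^sub>U. X - skeleton k X = Y - skeleton k Y)"
    by (rule upper_measure_coupling[of n p p', OF range])
  ultimately show ?thesis
    by blast
qed

end
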